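(* Let $A$ be a finite set of $m$ alternatives and $N=\{1,\dots,n\}$ a set of agents, and let preferences range over all weak orders (complete and transitive binary relations) on $A$. If $m\ge 4$ and $n\ge 4$, then there is no social decision scheme $f\colon \mathcal{R}^N\to\Delta(A)$ that is simultaneously anonymous, neutral, efficient, and strategyproof.
   Context: $\mathcal{R}$ denotes the set of all complete and transitive binary relations (weak preferences) on $A$; a preference profile is $R=(\succsim_1,\dots,\succsim_n)\in\mathcal{R}^N$. $\Delta(A)=\{p\in\mathbb{R}_{\ge0}^A:\sum_{x\in A}p(x)=1\}$ is the set of lotteries. A social decision scheme (SDS) is a function $f\colon\mathcal{R}^N\to\Delta(A)$. For $R\in\mathcal{R}^N$, $i\in N$ and $\succsim\in\mathcal{R}$, $R_{i:\succsim}$ denotes the profile obtained from $R$ by replacing $\succsim_i$ with $\succsim$. Anonymity: $f(R)=f(R\circ\sigma)$ for all $R$ and all permutations $\sigma$ of $N$. Neutrality: $f(R)(x)=f(\pi(R))(\pi(x))$ for all $R$, all permutations $\pi$ of $A$ and all $x\in A$, where $\pi(R)$ replaces each $\succsim_i$ by $\succsim_i^\pi$ defined by $\pi(x)\succsim_i^\pi\pi(y)$ iff $x\succsim_i y$. A utility function $u_i\colon A\to\mathbb{R}$ is consistent with $\succsim_i$ if $u_i(x)\ge u_i(y)\iff x\succsim_i y$; it is extended to lotteries by $u_i(p)=\sum_{x}p(x)u_i(x)$. A utility representation $u$ assigns to each profile $R$ a tuple $(u^R_1,\dots,u^R_n)$ of utility functions with $u^R_i$ consistent with $\succsim_i$.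 For a representation $u$ and profile $R$, lottery $p$ $u$-dominates $q$ at $R$ if $u^R_i(p)\ge u^R_i(q)$ for all $i$ and $u^R_i(p)>u^R_i(q)$ for some $i$. $f$ is efficient if there is no profile $R$ such that $f(R)$ is $u$-dominated at $R$ for all utility representations $u$ (i.e., it never returns a lottery that is $u$-dominated for every $u$). $f$ is manipulable if there exist a profile $R$, an agent $i$ and a preference relation $\succsim$ such that $u^R_i(f(R_{i:\succsim}))>u^R_i(f(R))$ for all utility representations $u$; $f$ is strategyproof if it is not manipulable. *)

theory Defs
  imports "HOL-Analysis.Analysis" "HOL-Combinatorics.Permutations"
begin

(* Alternatives: a finite carrier set A :: 'a set.
   Agents: N = {0..<n} (list positions); a preference profile is a list of
   length n of weak orders on A. *)

definition weak_order :: "'a set \<Rightarrow> 'a rel \<Rightarrow> bool" where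
  "weak_order A r \<longleftrightarrow> r \<subseteq> A \<times> A \<and>
     (\<forall>x\<in>A. \<forall>y\<in>A. (x, y) \<in> r \<or> (y, x) \<in> r) \<and> trans r"

definition profile :: "'a set \<Rightarrow> nat \<Rightarrow> 'a rel list \<Rightarrow> bool" where
  "profile A n R \<longleftrightarrow> length R = n \<and> (\<forall>i<n. weak_order A (R ! i))"

definition lottery :: "'a set \<Rightarrow> ('a \<Rightarrow> real) \<Rightarrow> bool" where
  "lottery A p \<longleftrightarrow> (\<forall>x. p x \<ge> 0) \<and> (\<forall>x. x \<notin> A \<longrightarrow> p x = 0) \<and> (\<Sum>x\<in>A. p x) = 1"

definition SDS :: "'a set \<Rightarrow> nat \<Rightarrow> ('a rel list \<Rightarrow> ('a \<Rightarrow> real)) \<Rightarrow> bool" where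
  "SDS A n f \<longleftrightarrow> (\<forall>R. profile A n R \<longrightarrow> lottery A (f R))"

definition anonymous :: "'a set \<Rightarrow> nat \<Rightarrow> ('a rel list \<Rightarrow> ('a \<Rightarrow> real)) \<Rightarrow> bool" where
  "anonymous A n f \<longleftrightarrow> (\<forall>R \<sigma>. profile A n R \<longrightarrow> \<sigma> permutes {0..<n} \<longrightarrow>
      f R = f (map (\<lambda>i. R ! \<sigma> i) [0..<n]))"

definition perm_profile :: "('a \<Rightarrow> 'a) \<Rightarrow> 'a rel list \<Rightarrow> 'a rel list" where
  "perm_profile \<pi> R = map (\<lambda>r. map_prod \<pi> \<pi> ` r) R"

definition neutral :: "'a set \<Rightarrow> nat \<Rightarrow> ('a rel list \<Rightarrow> ('a \<Rightarrow> real)) \<Rightarrow> bool" where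
  "neutral A n f \<longleftrightarrow> (\<forall>R \<pi> x. profile A n R \<longrightarrow> \<pi> permutes A \<longrightarrow>
      f R x = f (perm_profile \<pi> R) (\<pi> x))"

definition consistent :: "'a set \<Rightarrow> ('a \<Rightarrow> real) \<Rightarrow> 'a rel \<Rightarrow> bool" where
  "consistent A u r \<longleftrightarrow> (\<forall>x\<in>A. \<forall>y\<in>A. u x \<ge> u y \<longleftrightarrow> (x, y) \<in> r)"

definition exp_util :: "'a set \<Rightarrow> ('a \<Rightarrow> real) \<Rightarrow> ('a \<Rightarrow> real) \<Rightarrow> real" where
  "exp_util A u p = (\<Sum>x\<in>A. p x * u x)"

definition utility_rep ::
  "'a set \<Rightarrow> nat \<Rightarrow> ('a rel list \<Rightarrow> nat \<Rightarrow> 'a \<Rightarrow> real) \<Rightarrow> bool" where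
  "utility_rep A n u \<longleftrightarrow> (\<forall>R i. profile A n R \<longrightarrow> i < n \<longrightarrow> consistent A (u R i) (R ! i))"

definition u_dominates ::
  "'a set \<Rightarrow> nat \<Rightarrow> ('a rel list \<Rightarrow> nat \<Rightarrow> 'a \<Rightarrow> real) \<Rightarrow> 'a rel list \<Rightarrow>
   ('a \<Rightarrow> real) \<Rightarrow> ('a \<Rightarrow> real) \<Rightarrow> bool" where
  "u_dominates A n u R p q \<longleftrightarrow>
     (\<forall>i<n. exp_util A (u R i) p \<ge> exp_util A (u R i) q) \<and>
     (\<exists>i<n. exp_util A (u R i) p > exp_util A (u R i) q)"

definition u_dominated ::
  "'a set \<Rightarrow> nat \<Rightarrow> ('a rel list \<Rightarrow> nat \<Rightarrow> 'a \<Rightarrow> real) \<Rightarrow> 'a rel list \<Rightarrow>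
   ('a \<Rightarrow> real) \<Rightarrow> bool" where
  "u_dominated A n u R q \<longleftrightarrow> (\<exists>p. lottery A p \<and> u_dominates A n u R p q)"

definition efficient :: "'a set \<Rightarrow> nat \<Rightarrow> ('a rel list \<Rightarrow> ('a \<Rightarrow> real)) \<Rightarrow> bool" where
  "efficient A n f \<longleftrightarrow> \<not> (\<exists>R. profile A n R \<and>
      (\<forall>u. utility_rep A n u \<longrightarrow> u_dominated A n u R (f R)))"

definition manipulable :: "'a set \<Rightarrow> nat \<Rightarrow> ('a rel list \<Rightarrow> ('a \<Rightarrow> real)) \<Rightarrow> bool" where
  "manipulable A n f \<longleftrightarrow> (\<exists>R i r. profile A n R \<and> i < n \<and> weak_order A r \<and>
      (\<forall>u. utility_rep A n u \<longrightarrow>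
         exp_util A (u R i) (f (R[i := r])) > exp_util A (u R i) (f R)))"

definition strategyproof :: "'a set \<Rightarrow> nat \<Rightarrow> ('a rel list \<Rightarrow> ('a \<Rightarrow> real)) \<Rightarrow> bool" where
  "strategyproof A n f \<longleftrightarrow> \<not> manipulable A n f"

end

theory Submission
  imports Defs
begin

text \<open>
  Fix four alternatives
  a, b, c, d and consider only profiles in which four agents rank a, b, c, d above all other
  alternatives while the remaining agents are indifferent between all alternatives; for the
  latter every lottery is equally good, so they never matter.
  If a lottery stochastically dominates another one with respect to a weak order, then every
  utility function consistent with the order prefers it. Hence efficiency forbids returning a
  lottery that admits an SD-improvement for all agents at once, and strategyproofness forbids a
  misreport that yields an SD-better lottery for the manipulator. Together with anonymity and
  neutrality, which identify the outcomes of profiles that agree up to renaming agents and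
  alternatives, these constraints pin down the lotteries along a chain of fourteen profiles; at
  the last one they demand probability at least 1/2 for {a, c} and more than 5/8 for {b, d}.
\<close>

section \<open>Stochastic dominance\<close>

definition upper_set :: "'a set \<Rightarrow> 'a rel \<Rightarrow> 'a \<Rightarrow> 'a set" where
  "upper_set A r x = {y \<in> A. (y, x) \<in> r}"

lemma sum_mult_split_at_min:
  fixes d u :: "'a \<Rightarrow> real"
  assumes "finite B" "\<forall>y\<in>B. m \<le> u y"
  shows "(\<Sum>x\<in>B. d x * u x) = m * sum d B + (\<Sum>x\<in>{y\<in>B. m < u y}. d x * (u x - m))"
proof -
  have "(\<Sum>x\<in>B. d x * u x) = m * sum d B + (\<Sum>x\<in>B. d x * (u x - m))"
    by (simp add: algebra_simps sum.distrib sum_subtractf sum_distrib_left)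
  also have "(\<Sum>x\<in>B. d x * (u x - m)) = (\<Sum>x\<in>{y\<in>B. m < u y}. d x * (u x - m))"
    using assms by (intro sum.mono_neutral_right) force+
  finally show ?thesis .
qed

lemma sum_mult_nonneg_by_upper_sums:
  fixes d u :: "'a \<Rightarrow> real"
  assumes "finite B" "\<forall>x\<in>B. 0 \<le> u x" "\<forall>x\<in>B. 0 \<le> sum d {y\<in>B. u x \<le> u y}"
  shows "0 \<le> (\<Sum>x\<in>B. d x * u x) \<and>
    ((\<exists>x\<in>B. 0 < u x \<and> 0 < sum d {y\<in>B. u x \<le> u y}) \<longrightarrow> 0 < (\<Sum>x\<in>B. d x * u x))"
  using assms
proof (induction "card B" arbitrary: B u rule: less_induct)
  case less
  show ?case
  proof (cases "B = {}")
    case False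
    define m where "m = Min (u ` B)"
    have "m \<in> u ` B"
      using less.prems(1) False unfolding m_def by (intro Min_in) auto
    then obtain x0 where x0: "x0 \<in> B" "u x0 = m" by auto
    have m_le: "\<forall>y\<in>B. m \<le> u y"
      using less.prems(1) unfolding m_def by simp
    define B' where "B' = {y\<in>B. m < u y}"
    define u' where "u' = (\<lambda>y. u y - m)"
    have upper': "{y\<in>B'. u' x \<le> u' y} = {y\<in>B. u x \<le> u y}" if "x \<in> B'" for x
      using that unfolding B'_def u'_def by auto
    have "card B' < card B"
      using x0 less.prems(1) unfolding B'_def by (intro psubset_card_mono) auto
    then have IH: "0 \<le> (\<Sum>x\<in>B'. d x * u' x) \<and>
        ((\<exists>x\<in>B'. 0 < u' x \<and> 0 < sum d {y\<in>B'. u' x \<le> u' y}) \<longrightarrow> 0 < (\<Sum>x\<in>B'. d x * u' x))"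
      using less.prems upper' by (intro less.hyps) (auto simp: B'_def u'_def)
    have split: "(\<Sum>x\<in>B. d x * u x) = m * sum d B + (\<Sum>x\<in>B'. d x * u' x)"
      using sum_mult_split_at_min[OF less.prems(1) m_le] unfolding B'_def u'_def .
    have all: "{y\<in>B. u x0 \<le> u y} = B"
      using x0 m_le by auto
    have "0 \<le> m" "0 \<le> sum d B"
      using x0 less.prems(2,3) all by metis+
    moreover have "0 < (\<Sum>x\<in>B. d x * u x)"
      if "x \<in> B" "0 < u x" "0 < sum d {y\<in>B. u x \<le> u y}" for x
    proof (cases "u x = m")
      case True
      then have "{y\<in>B. u x \<le> u y} = B"
        using m_le by auto
      then have "0 < m * sum d B"
        using that True by simp
      with split IH show ?thesis by linarith
    next
      case False
      then have "x \<in> B'" "0 < u' x"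
        using that m_le unfolding B'_def u'_def by force+
      with IH upper' that have "0 < (\<Sum>x\<in>B'. d x * u' x)" by auto
      with split \<open>0 \<le> m\<close> \<open>0 \<le> sum d B\<close> show ?thesis by (simp add: add_nonneg_pos)
    qed
    ultimately show ?thesis
      using split IH by auto
  qed simp
qed

lemma upper_set_consistent:
  "consistent A u r \<Longrightarrow> x \<in> A \<Longrightarrow> upper_set A r x = {y\<in>A. u x \<le> u y}"
  unfolding consistent_def upper_set_def by auto

lemma sd_gain_imp_utility_gain:
  fixes \<delta> u :: "'a \<Rightarrow> real"
  assumes fin: "finite A" and cons: "consistent A u r" and total: "sum \<delta> A = 0"
    and upper: "\<forall>x\<in>A. 0 \<le> sum \<delta> (upper_set A r x)"
  shows "0 \<le> (\<Sum>x\<in>A. \<delta> x * u x)"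
    and "\<exists>x\<in>A. 0 < sum \<delta> (upper_set A r x) \<Longrightarrow> 0 < (\<Sum>x\<in>A. \<delta> x * u x)"
proof -
  define m where "m = Min (u ` A)"
  have m_le: "\<forall>y\<in>A. m \<le> u y"
    using fin unfolding m_def by simp
  define u' where "u' = (\<lambda>y. u y - m)"
  have "(\<Sum>x\<in>A. \<delta> x * u' x) = (\<Sum>x\<in>A. \<delta> x * u x) - m * sum \<delta> A"
    unfolding u'_def by (simp add: right_diff_distrib sum_subtractf sum_distrib_left mult.commute)
  with total have shift: "(\<Sum>x\<in>A. \<delta> x * u x) = (\<Sum>x\<in>A. \<delta> x * u' x)"
    by simp
  have upper': "upper_set A r x = {y\<in>A. u' x \<le> u' y}" if "x \<in> A" for x
    using upper_set_consistent[OF cons that] unfolding u'_def by auto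
  have layer: "0 \<le> (\<Sum>x\<in>A. \<delta> x * u' x) \<and>
      ((\<exists>x\<in>A. 0 < u' x \<and> 0 < sum \<delta> {y\<in>A. u' x \<le> u' y}) \<longrightarrow> 0 < (\<Sum>x\<in>A. \<delta> x * u' x))"
    using m_le upper upper' by (intro sum_mult_nonneg_by_upper_sums[OF fin]) (auto simp: u'_def)
  then show "0 \<le> (\<Sum>x\<in>A. \<delta> x * u x)"
    using shift by simp
  assume "\<exists>x\<in>A. 0 < sum \<delta> (upper_set A r x)"
  then obtain x where x: "x \<in> A" "0 < sum \<delta> (upper_set A r x)" by blast
  \<comment> \<open>at the bottom level the upper set is all of A, whose total gain is zero\<close>
  have "0 < u' x"
  proof (rule ccontr)
    assume "\<not> 0 < u' x"
    then have "upper_set A r x = A"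
      using upper'[OF x(1)] m_le unfolding u'_def by force
    with x total show False by simp
  qed
  with layer x upper' shift show "0 < (\<Sum>x\<in>A. \<delta> x * u x)" by auto
qed

lemma exp_util_diff:
  "exp_util A u p - exp_util A u q = (\<Sum>x\<in>A. (p x - q x) * u x)"
  unfolding exp_util_def by (simp add: sum_subtractf algebra_simps)

lemma lottery_step:
  fixes \<delta> :: "'a \<Rightarrow> real"
  assumes fin: "finite A" and q: "lottery A q"
    and outside: "\<forall>x. x \<notin> A \<longrightarrow> \<delta> x = 0" and total: "sum \<delta> A = 0"
    and support: "\<forall>x\<in>A. \<delta> x < 0 \<longrightarrow> 0 < q x"
  obtains \<epsilon> where "0 < \<epsilon>" "lottery A (\<lambda>x. q x + \<epsilon> * \<delta> x)"
proof
  define S where "S = {x\<in>A. \<delta> x < 0}"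
  have "finite S"
    using fin unfolding S_def by auto
  define \<epsilon> where "\<epsilon> = Min (insert 1 ((\<lambda>x. q x / - \<delta> x) ` S))"
  show \<epsilon>_pos: "0 < \<epsilon>"
    unfolding \<epsilon>_def using \<open>finite S\<close> support
    by (subst Min_gr_iff) (auto simp: S_def divide_pos_neg)
  have \<epsilon>_le: "\<epsilon> * - \<delta> x \<le> q x" if "x \<in> S" for x
  proof -
    have "\<epsilon> \<le> q x / - \<delta> x"
      unfolding \<epsilon>_def using \<open>finite S\<close> that by simp
    then show ?thesis
      using that pos_le_divide_eq[of "- \<delta> x"] by (simp add: S_def)
  qed
  show "lottery A (\<lambda>x. q x + \<epsilon> * \<delta> x)"
    unfolding lottery_def
  proof (intro conjI allI impI)
    fix x
    show "0 \<le> q x + \<epsilon> * \<delta> x"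
    proof (cases "x \<in> S")
      case True
      then show ?thesis
        using \<epsilon>_le[OF True] by simp
    next
      case False
      then have "0 \<le> \<delta> x"
        using outside unfolding S_def by (cases "x \<in> A") auto
      then show ?thesis
        using \<epsilon>_pos q unfolding lottery_def by simp
    qed
  next
    fix x assume "x \<notin> A"
    then show "q x + \<epsilon> * \<delta> x = 0"
      using q outside unfolding lottery_def by auto
  next
    show "(\<Sum>x\<in>A. q x + \<epsilon> * \<delta> x) = 1"
      using q total unfolding lottery_def by (simp add: sum.distrib sum_distrib_left[symmetric])
  qed
qed

lemma efficient_no_sd_improvement:
  fixes \<delta> :: "'a \<Rightarrow> real"
  assumes fin: "finite A" and sds: "SDS A n f" and eff: "efficient A n f" and R: "profile A n R"
    and outside: "\<forall>x. x \<notin> A \<longrightarrow> \<delta> x = 0" and total: "sum \<delta> A = 0"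
    and upper: "\<forall>i<n. \<forall>x\<in>A. 0 \<le> sum \<delta> (upper_set A (R ! i) x)"
    and strict: "\<exists>i<n. \<exists>x\<in>A. 0 < sum \<delta> (upper_set A (R ! i) x)"
    and support: "\<forall>x\<in>A. \<delta> x < 0 \<longrightarrow> 0 < f R x"
  shows False
proof -
  define q where "q = f R"
  have "lottery A q"
    using sds R unfolding SDS_def q_def by auto
  then obtain \<epsilon> where \<epsilon>_pos: "0 < \<epsilon>" and "lottery A (\<lambda>x. q x + \<epsilon> * \<delta> x)"
    using lottery_step[OF fin _ outside total] support unfolding q_def by blast
  define p where "p = (\<lambda>x. q x + \<epsilon> * \<delta> x)"
  have p: "lottery A p"
    unfolding p_def by fact
  have "u_dominated A n u R (f R)" if u: "utility_rep A n u" for u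
  proof -
    have gain: "exp_util A (u R i) p - exp_util A (u R i) q = \<epsilon> * (\<Sum>x\<in>A. \<delta> x * u R i x)" for i
      unfolding exp_util_diff p_def by (simp add: sum_distrib_left algebra_simps)
    have cons: "consistent A (u R i) (R ! i)" if "i < n" for i
      using u R that unfolding utility_rep_def by auto
    obtain i where i: "i < n" "\<exists>x\<in>A. 0 < sum \<delta> (upper_set A (R ! i) x)"
      using strict by blast
    show ?thesis
      unfolding u_dominated_def u_dominates_def q_def[symmetric]
    proof (intro exI[of _ p] conjI p allI impI exI[of _ i])
      fix j assume "j < n"
      then show "exp_util A (u R j) q \<le> exp_util A (u R j) p"
        using sd_gain_imp_utility_gain(1)[OF fin cons total] upper gain[of j] \<epsilon>_pos
        by (simp add: algebra_simps)
    next
      show "i < n" by fact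
      show "exp_util A (u R i) q < exp_util A (u R i) p"
        using sd_gain_imp_utility_gain(2)[OF fin cons[OF i(1)] total] upper i gain[of i] \<epsilon>_pos
        by (simp add: algebra_simps)
    qed
  qed
  then show False
    using eff R unfolding efficient_def by auto
qed

lemma strategyproof_no_sd_improvement:
  assumes fin: "finite A" and sds: "SDS A n f" and sp: "strategyproof A n f"
    and R: "profile A n R" and i: "i < n" and r: "weak_order A r"
    and weak: "\<forall>x\<in>A.
      sum (f R) (upper_set A (R ! i) x) \<le> sum (f (R[i := r])) (upper_set A (R ! i) x)"
    and strict: "\<exists>x\<in>A.
      sum (f R) (upper_set A (R ! i) x) < sum (f (R[i := r])) (upper_set A (R ! i) x)"
  shows False
proof -
  have "profile A n (R[i := r])"
    using R r unfolding profile_def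
    by (metis length_list_update nth_list_update_eq nth_list_update_neq)
  then have "lottery A (f R)" "lottery A (f (R[i := r]))"
    using sds R unfolding SDS_def by auto
  then have total: "sum (\<lambda>y. f (R[i := r]) y - f R y) A = 0"
    unfolding lottery_def by (simp add: sum_subtractf)
  have "exp_util A (u R i) (f R) < exp_util A (u R i) (f (R[i := r]))"
    if "utility_rep A n u" for u
  proof -
    have cons: "consistent A (u R i) (R ! i)"
      using that R i unfolding utility_rep_def by auto
    have "0 < (\<Sum>x\<in>A. (f (R[i := r]) x - f R x) * u R i x)"
      using sd_gain_imp_utility_gain(2)[OF fin cons total] weak strict
      by (simp add: sum_subtractf)
    then show ?thesis
      using exp_util_diff[of A "u R i" "f (R[i := r])" "f R"] by simp
  qed
  then have "manipulable A n f"
    unfolding manipulable_def using R i r by blast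
  with sp show False
    unfolding strategyproof_def by simp
qed

section \<open>Anonymity and neutrality on profiles given by ranks\<close>

lemma anonymous_mset_eq:
  assumes "anonymous A n f" "profile A n R" "mset R' = mset R"
  shows "f R' = f R"
proof -
  obtain p where p: "p permutes {..<length R}" "permute_list p R = R'"
    using mset_eq_permutation[OF assms(3)] .
  have "length R = n"
    using assms(2) unfolding profile_def by simp
  with p assms(1,2) show ?thesis
    unfolding anonymous_def permute_list_def by (metis atLeast0LessThan)
qed

definition of_rank :: "'a set \<Rightarrow> ('a \<Rightarrow> nat) \<Rightarrow> 'a rel" where
  "of_rank A v = {(x, y) \<in> A \<times> A. v y \<le> v x}"

lemma weak_order_of_rank: "weak_order A (of_rank A v)"
  unfolding weak_order_def of_rank_def trans_def by auto

lemma upper_set_of_rank: "x \<in> A \<Longrightarrow> upper_set A (of_rank A v) x = {y\<in>A. v x \<le> v y}"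
  unfolding upper_set_def of_rank_def by auto

lemma perm_profile_of_rank:
  assumes "\<pi> permutes A"
  shows "perm_profile \<pi> (map (of_rank A) vs) = map (of_rank A) (map (\<lambda>v. v \<circ> inv \<pi>) vs)"
proof -
  have "map_prod \<pi> \<pi> ` of_rank A v = of_rank A (v \<circ> inv \<pi>)" for v
  proof (intro equalityI subsetI)
    fix q assume "q \<in> map_prod \<pi> \<pi> ` of_rank A v"
    then show "q \<in> of_rank A (v \<circ> inv \<pi>)"
      using assms unfolding of_rank_def by (auto simp: permutes_inverses permutes_in_image)
  next
    fix q assume q: "q \<in> of_rank A (v \<circ> inv \<pi>)"
    then obtain x y where "q = (x, y)" "x \<in> A" "y \<in> A" "v (inv \<pi> y) \<le> v (inv \<pi> x)"
      unfolding of_rank_def by auto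
    moreover have "inv \<pi> z \<in> A" "\<pi> (inv \<pi> z) = z" if "z \<in> A" for z
      using assms that permutes_inv[OF assms] by (auto simp: permutes_inverses permutes_in_image)
    ultimately show "q \<in> map_prod \<pi> \<pi> ` of_rank A v"
      unfolding of_rank_def by (auto intro!: image_eqI[of _ _ "(inv \<pi> x, inv \<pi> y)"])
  qed
  then show ?thesis
    unfolding perm_profile_def by simp
qed

section \<open>Profiles with a, b, c, d on top\<close>

locale sds_four_alternatives =
  fixes A :: "'a set" and n :: nat and f :: "'a rel list \<Rightarrow> 'a \<Rightarrow> real" and a b c d :: 'a
  assumes finite_A: "finite A" and n_ge_4: "4 \<le> n"
    and sds: "SDS A n f" and anonymous: "anonymous A n f" and neutral: "neutral A n f"
    and efficient: "efficient A n f" and strategyproof: "strategyproof A n f"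
    and abcd_subset: "{a, b, c, d} \<subseteq> A" and distinct_abcd: "distinct [a, b, c, d]"
begin

lemma abcd_neq [simp]:
  "a \<noteq> b" "a \<noteq> c" "a \<noteq> d" "b \<noteq> c" "b \<noteq> d" "c \<noteq> d"
  "b \<noteq> a" "c \<noteq> a" "d \<noteq> a" "c \<noteq> b" "d \<noteq> b" "d \<noteq> c"
  using distinct_abcd by auto

definition on_abcd :: "'b::zero \<Rightarrow> 'b \<Rightarrow> 'b \<Rightarrow> 'b \<Rightarrow> 'a \<Rightarrow> 'b" where
  "on_abcd ya yb yc yd x =
     (if x = a then ya else if x = b then yb else if x = c then yc else if x = d then yd else 0)"

lemma on_abcd_simps [simp]:
  "on_abcd ya yb yc yd a = ya" "on_abcd ya yb yc yd b = yb"
  "on_abcd ya yb yc yd c = yc" "on_abcd ya yb yc yd d = yd"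
  "x \<notin> {a, b, c, d} \<Longrightarrow> on_abcd ya yb yc yd x = 0"
  unfolding on_abcd_def by auto

definition abcd_on_top :: "('a \<Rightarrow> nat) \<Rightarrow> bool" where
  "abcd_on_top v \<longleftrightarrow>
     (\<forall>x. x \<notin> {a, b, c, d} \<longrightarrow> v x = 0) \<and> 0 < v a \<and> 0 < v b \<and> 0 < v c \<and> 0 < v d"

lemma abcd_on_top_on_abcd [simp]:
  "abcd_on_top (on_abcd ka kb kc kd) \<longleftrightarrow> 0 < ka \<and> 0 < kb \<and> 0 < kc \<and> 0 < kd"
  unfolding abcd_on_top_def by simp

definition prof :: "('a \<Rightarrow> nat) list \<Rightarrow> 'a rel list" where
  "prof vs = map (of_rank A) (vs @ replicate (n - 4) (\<lambda>_. 0))"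

definition upper_prob :: "('a \<Rightarrow> nat) \<Rightarrow> 'a \<Rightarrow> ('a \<Rightarrow> real) \<Rightarrow> real" where
  "upper_prob v x p = sum p {y \<in> {a, b, c, d}. v x \<le> v y}"

lemma upper_prob_expand:
  "upper_prob v x p = (if v x \<le> v a then p a else 0) + (if v x \<le> v b then p b else 0)
     + (if v x \<le> v c then p c else 0) + (if v x \<le> v d then p d else 0)"
  unfolding upper_prob_def by (subst sum.inter_filter) (simp_all add: add.assoc)

lemma profile_prof: "length vs = 4 \<Longrightarrow> profile A n (prof vs)"
  unfolding profile_def prof_def using n_ge_4 by (simp add: weak_order_of_rank del: map_append)

lemma prof_nth:
  "length vs = 4 \<Longrightarrow> i < n \<Longrightarrow> prof vs ! i = of_rank A ((vs @ replicate (n - 4) (\<lambda>_. 0)) ! i)"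
  unfolding prof_def by (simp del: map_append)

lemma prof_update:
  "length vs = 4 \<Longrightarrow> j < 4 \<Longrightarrow> (prof vs)[j := of_rank A w] = prof (vs[j := w])"
  unfolding prof_def by (simp add: list_update_append map_update)

lemma sum_upper_set_eq_upper_prob:
  assumes "\<forall>y. y \<notin> {a, b, c, d} \<longrightarrow> p y = 0"
  shows "sum p {y\<in>A. v x \<le> v y} = upper_prob v x p"
  unfolding upper_prob_def using finite_A abcd_subset assms
  by (intro sum.mono_neutral_right) auto

lemma sum_eq_abcd:
  assumes "\<forall>y. y \<notin> {a, b, c, d} \<longrightarrow> p y = 0"
  shows "sum p A = p a + p b + p c + p d"
proof -
  have "sum p A = sum p {a, b, c, d}"
    using finite_A abcd_subset assms by (intro sum.mono_neutral_right) auto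
  then show ?thesis
    by (simp add: add.assoc)
qed

lemma upper_prob_bottom:
  "v x = 0 \<Longrightarrow> upper_prob v x p = p a + p b + p c + p d"
  unfolding upper_prob_expand by simp

lemma prof_outside_zero:
  assumes len: "length vs = 4" and top: "\<forall>v\<in>set vs. abcd_on_top v" and x: "x \<notin> {a, b, c, d}"
  shows "f (prof vs) x = 0"
proof (rule ccontr)
  assume "f (prof vs) x \<noteq> 0"
  moreover have lot: "lottery A (f (prof vs))"
    using sds profile_prof[OF len] unfolding SDS_def by auto
  ultimately have "x \<in> A" "0 < f (prof vs) x"
    unfolding lottery_def by (metis order_less_le)+
  \<comment> \<open>moving the probability of x to a is an improvement for every agent\<close>
  define \<delta> :: "'a \<Rightarrow> real" where "\<delta> y = of_bool (y = a) - of_bool (y = x)" for y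
  have upper_\<delta>: "sum \<delta> {y\<in>A. v z \<le> v y} = of_bool (v z \<le> v a) - of_bool (v z \<le> v x)"
    for v :: "'a \<Rightarrow> nat" and z
  proof -
    have "sum \<delta> {y\<in>A. v z \<le> v y} = sum \<delta> ({y\<in>A. v z \<le> v y} \<inter> {a, x})"
      using finite_A by (intro sum.mono_neutral_right) (auto simp: \<delta>_def)
    also have "\<dots> = of_bool (v z \<le> v a) - of_bool (v z \<le> v x)"
      using x abcd_subset \<open>x \<in> A\<close> by (cases "v z \<le> v a"; cases "v z \<le> v x") (auto simp: \<delta>_def)
    finally show ?thesis .
  qed
  let ?vs = "vs @ replicate (n - 4) (\<lambda>_. 0)"
  have rank: "(?vs ! i) x = 0 \<and> (i < 4 \<longrightarrow> 0 < (?vs ! i) a)" if "i < n" for i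
    using top x len that nth_mem[of i vs] unfolding abcd_on_top_def by (auto simp: nth_append)
  show False
  proof (rule efficient_no_sd_improvement[OF finite_A sds efficient profile_prof[OF len]])
    show "\<forall>y. y \<notin> A \<longrightarrow> \<delta> y = 0"
      using abcd_subset \<open>x \<in> A\<close> by (auto simp: \<delta>_def)
    show "sum \<delta> A = 0"
      using upper_\<delta>[of "\<lambda>_. 0" a] by simp
    show "\<forall>i<n. \<forall>z\<in>A. 0 \<le> sum \<delta> (upper_set A (prof vs ! i) z)"
      using rank by (simp add: prof_nth[OF len] upper_set_of_rank upper_\<delta>)
    show "\<exists>i<n. \<exists>z\<in>A. 0 < sum \<delta> (upper_set A (prof vs ! i) z)"
      using rank[of 0] n_ge_4 abcd_subset
      by (intro exI[of _ 0] bexI[of _ a]) (auto simp: prof_nth[OF len] upper_set_of_rank upper_\<delta>)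
    show "\<forall>y\<in>A. \<delta> y < 0 \<longrightarrow> 0 < f (prof vs) y"
      using \<open>0 < f (prof vs) x\<close> by (simp add: \<delta>_def)
  qed
qed

lemma prof_lottery:
  assumes len: "length vs = 4" and top: "\<forall>v\<in>set vs. abcd_on_top v"
  shows "0 \<le> f (prof vs) a" "0 \<le> f (prof vs) b" "0 \<le> f (prof vs) c" "0 \<le> f (prof vs) d"
    and "f (prof vs) a + f (prof vs) b + f (prof vs) c + f (prof vs) d = 1"
proof -
  have lot: "lottery A (f (prof vs))"
    using sds profile_prof[OF len] unfolding SDS_def by auto
  then show "0 \<le> f (prof vs) a" "0 \<le> f (prof vs) b" "0 \<le> f (prof vs) c" "0 \<le> f (prof vs) d"
    unfolding lottery_def by simp_all
  have "sum (f (prof vs)) A = f (prof vs) a + f (prof vs) b + f (prof vs) c + f (prof vs) d"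
    using prof_outside_zero[OF len top] by (intro sum_eq_abcd) auto
  with lot show "f (prof vs) a + f (prof vs) b + f (prof vs) c + f (prof vs) d = 1"
    unfolding lottery_def by simp
qed

lemma sum_upper_set_prof:
  assumes "length vs = 4" "i < n" "x \<in> A" "\<forall>y. y \<notin> {a, b, c, d} \<longrightarrow> p y = 0"
  shows "sum p (upper_set A (prof vs ! i) x) =
    upper_prob ((vs @ replicate (n - 4) (\<lambda>_. 0)) ! i) x p"
  using assms by (simp add: prof_nth upper_set_of_rank sum_upper_set_eq_upper_prob)

lemma no_sd_manipulation:
  assumes weak: "\<forall>x\<in>{a, b, c, d}. upper_prob v x (f (prof vs)) \<le> upper_prob v x (f (prof vs'))"
    and len: "length vs = 4" and top: "\<forall>v\<in>set vs. abcd_on_top v"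
    and j: "j < 4" and v: "vs ! j = v" and vs': "vs[j := w] = vs'" and w: "abcd_on_top w"
  shows "\<forall>x\<in>{a, b, c, d}. upper_prob v x (f (prof vs')) = upper_prob v x (f (prof vs))"
proof (rule ccontr)
  assume "\<not> ?thesis"
  with weak obtain x0 where x0: "x0 \<in> {a, b, c, d}"
    "upper_prob v x0 (f (prof vs)) < upper_prob v x0 (f (prof vs'))"
    by force
  have len': "length vs' = 4" and top': "\<forall>v\<in>set vs'. abcd_on_top v"
    using len top w set_update_subset_insert unfolding vs'[symmetric] by fastforce+
  have upper: "sum (f (prof us)) (upper_set A (prof vs ! j) x) = upper_prob v x (f (prof us))"
    if "x \<in> A" "length us = 4" "\<forall>v\<in>set us. abcd_on_top v" for x us
    using sum_upper_set_prof[OF len _ that(1)] prof_outside_zero[OF that(2,3)] j len n_ge_4 v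
    by (simp add: nth_append)
  have bottom: "upper_prob v x (f (prof us)) = 1"
    if "x \<notin> {a, b, c, d}" "length us = 4" "\<forall>v\<in>set us. abcd_on_top v" for x us
  proof -
    have "v x = 0"
      using top j len v that(1) unfolding abcd_on_top_def by auto
    then show ?thesis
      using prof_lottery(5)[OF that(2,3)] by (simp add: upper_prob_bottom)
  qed
  have update: "(prof vs)[j := of_rank A w] = prof vs'"
    using prof_update[OF len j] vs' by simp
  show False
  proof (rule strategyproof_no_sd_improvement
      [OF finite_A sds strategyproof profile_prof[OF len] _ weak_order_of_rank])
    show "j < n"
      using j n_ge_4 by simp
    show "\<forall>x\<in>A. sum (f (prof vs)) (upper_set A (prof vs ! j) x)
        \<le> sum (f ((prof vs)[j := of_rank A w])) (upper_set A (prof vs ! j) x)"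
    proof
      fix x assume x: "x \<in> A"
      have "upper_prob v x (f (prof vs)) \<le> upper_prob v x (f (prof vs'))"
        using weak bottom[OF _ len top] bottom[OF _ len' top']
        by (cases "x \<in> {a, b, c, d}") (blast, simp)
      then show "sum (f (prof vs)) (upper_set A (prof vs ! j) x)
          \<le> sum (f ((prof vs)[j := of_rank A w])) (upper_set A (prof vs ! j) x)"
        by (simp add: update upper[OF x len top] upper[OF x len' top'])
    qed
    show "\<exists>x\<in>A. sum (f (prof vs)) (upper_set A (prof vs ! j) x)
        < sum (f ((prof vs)[j := of_rank A w])) (upper_set A (prof vs ! j) x)"
      using x0 abcd_subset upper[OF _ len top] upper[OF _ len' top']
      by (auto simp: update)
  qed
qed

lemma efficient_prof:
  assumes len: "length vs = 4" and top: "\<forall>v\<in>set vs. abcd_on_top v"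
    and total: "da + db + dc + dd = 0"
    and weak: "\<forall>v\<in>set vs. \<forall>x\<in>{a, b, c, d}. 0 \<le> upper_prob v x (on_abcd da db dc dd)"
    and strict: "\<exists>v\<in>set vs. \<exists>x\<in>{a, b, c, d}. 0 < upper_prob v x (on_abcd da db dc dd)"
  shows "\<exists>x\<in>{a, b, c, d}. on_abcd da db dc dd x < 0 \<and> f (prof vs) x = 0"
proof (rule ccontr)
  assume no_zero: "\<not> ?thesis"
  let ?\<delta> = "on_abcd da db dc dd :: 'a \<Rightarrow> real" and ?vs = "vs @ replicate (n - 4) (\<lambda>_. 0)"
  have outside: "\<forall>y. y \<notin> {a, b, c, d} \<longrightarrow> ?\<delta> y = 0"
    by simp
  have upper: "sum ?\<delta> (upper_set A (prof vs ! i) x) = upper_prob (?vs ! i) x ?\<delta>"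
    if "i < n" "x \<in> A" for i x
    using sum_upper_set_prof[OF len that outside] .
  have bottom: "upper_prob v x ?\<delta> = 0" if "v x = 0" for v x
    using total that by (simp add: upper_prob_bottom)
  have rank: "?vs ! i \<in> set vs \<or> ?vs ! i = (\<lambda>_. 0)" if "i < n" for i
    using that len by (auto simp: nth_append)
  show False
  proof (rule efficient_no_sd_improvement[OF finite_A sds efficient profile_prof[OF len]])
    show "\<forall>y. y \<notin> A \<longrightarrow> ?\<delta> y = 0"
      using abcd_subset outside by blast
    show "sum ?\<delta> A = 0"
      using sum_eq_abcd[OF outside] total by simp
    show "\<forall>i<n. \<forall>x\<in>A. 0 \<le> sum ?\<delta> (upper_set A (prof vs ! i) x)"
    proof (intro allI impI ballI)
      fix i x assume "i < n" "x \<in> A"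
      then show "0 \<le> sum ?\<delta> (upper_set A (prof vs ! i) x)"
        using upper rank[of i] weak top bottom unfolding abcd_on_top_def
        by (cases "x \<in> {a, b, c, d}") auto
    qed
    obtain v x where "v \<in> set vs" "x \<in> {a, b, c, d}" "0 < upper_prob v x ?\<delta>"
      using strict by blast
    moreover obtain i where "i < 4" "vs ! i = v"
      using \<open>v \<in> set vs\<close> len by (metis in_set_conv_nth)
    ultimately show "\<exists>i<n. \<exists>x\<in>A. 0 < sum ?\<delta> (upper_set A (prof vs ! i) x)"
      using upper abcd_subset n_ge_4 len
      by (intro exI[of _ i] conjI bexI[of _ x]) (auto simp: nth_append)
    show "\<forall>x\<in>A. ?\<delta> x < 0 \<longrightarrow> 0 < f (prof vs) x"
    proof (intro ballI impI)
      fix x assume "?\<delta> x < 0"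
      then have x: "x \<in> {a, b, c, d}"
        using outside by fastforce
      then have "0 \<le> f (prof vs) x"
        using prof_lottery(1-4)[OF len top] by auto
      with x no_zero \<open>?\<delta> x < 0\<close> show "0 < f (prof vs) x"
        by force
    qed
  qed
qed

lemma prof_anonymous: "length vs = 4 \<Longrightarrow> mset ws = mset vs \<Longrightarrow> f (prof ws) = f (prof vs)"
  by (rule anonymous_mset_eq[OF anonymous profile_prof]) (simp_all add: prof_def)

definition relabel :: "'a \<Rightarrow> 'a \<Rightarrow> 'a \<Rightarrow> 'a \<Rightarrow> 'a \<Rightarrow> 'a" where
  "relabel a' b' c' d' x =
     (if x = a then a' else if x = b then b' else if x = c then c' else if x = d then d' else x)"

lemma relabel_permutes:
  assumes distinct: "distinct [a', b', c', d']" and subset: "{a', b', c', d'} \<subseteq> {a, b, c, d}"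
  shows "relabel a' b' c' d' permutes A"
proof -
  have "card {a', b', c', d'} = card {a, b, c, d}"
    using distinct_card[OF distinct] distinct_card[OF distinct_abcd] by simp
  then have "{a', b', c', d'} = {a, b, c, d}"
    using subset by (intro card_subset_eq) auto
  moreover have "relabel a' b' c' d' ` {a, b, c, d} = {a', b', c', d'}"
    unfolding image_insert image_empty by (simp add: relabel_def)
  ultimately have "relabel a' b' c' d' ` {a, b, c, d} = {a, b, c, d}"
    by simp
  then have "bij_betw (relabel a' b' c' d') {a, b, c, d} {a, b, c, d}"
    by (metis bij_betw_def finite.emptyI finite.insertI finite_surj_inj order_refl)
  then have "relabel a' b' c' d' permutes {a, b, c, d}"
    by (rule bij_imp_permutes) (simp add: relabel_def)
  then show ?thesis
    using abcd_subset by (rule permutes_subset)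
qed

lemma prof_relabel:
  assumes len: "length vs = 4" and top: "\<forall>v\<in>set vs. abcd_on_top v"
    and distinct: "distinct [a', b', c', d']" and subset: "{a', b', c', d'} \<subseteq> {a, b, c, d}"
    and ws: "mset ws = mset (map (\<lambda>v. on_abcd (v a') (v b') (v c') (v d')) vs)"
  shows "f (prof ws) a = f (prof vs) a'" and "f (prof ws) b = f (prof vs) b'"
    and "f (prof ws) c = f (prof vs) c'" and "f (prof ws) d = f (prof vs) d'"
proof -
  let ?\<sigma> = "relabel a' b' c' d'"
  have \<sigma>: "?\<sigma> permutes A"
    using relabel_permutes[OF distinct subset] .
  have "v \<circ> ?\<sigma> = on_abcd (v a') (v b') (v c') (v d')" if "abcd_on_top v" for v
    using that unfolding abcd_on_top_def by (auto simp: fun_eq_iff relabel_def on_abcd_def)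
  then have "map (\<lambda>v. v \<circ> ?\<sigma>) vs = map (\<lambda>v. on_abcd (v a') (v b') (v c') (v d')) vs"
    using top by simp
  then have relabelled:
    "perm_profile (inv ?\<sigma>) (prof vs) = prof (map (\<lambda>v. on_abcd (v a') (v b') (v c') (v d')) vs)"
    unfolding prof_def perm_profile_of_rank[OF permutes_inv[OF \<sigma>]]
    using permutes_inv_inv[OF \<sigma>] by (simp add: comp_def)
  have "f (prof vs) x = f (perm_profile (inv ?\<sigma>) (prof vs)) (inv ?\<sigma> x)" for x
    using neutral profile_prof[OF len] permutes_inv[OF \<sigma>] unfolding neutral_def by blast
  moreover have "f (prof ws) = f (prof (map (\<lambda>v. on_abcd (v a') (v b') (v c') (v d')) vs))"
    using len ws by (intro prof_anonymous) simp_all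
  ultimately have "f (prof ws) y = f (prof vs) (?\<sigma> y)" for y
    using relabelled by (simp add: permutes_inverses(2)[OF \<sigma>])
  then show "f (prof ws) a = f (prof vs) a'" "f (prof ws) b = f (prof vs) b'"
    "f (prof ws) c = f (prof vs) c'" "f (prof ws) d = f (prof vs) d'"
    by (simp_all add: relabel_def)
qed

section \<open>A chain of fourteen profiles\<close>

text \<open>
  Weak orders on a, b, c, d as rank functions; the name lists the indifference classes from best
  to worst, so ab_c_d ranks a and b jointly first, then c, then d.
\<close>

abbreviation "ab_c_d \<equiv> on_abcd (3::nat) 3 2 1"
abbreviation "ab_d_c \<equiv> on_abcd (3::nat) 3 1 2"
abbreviation "ab_cd \<equiv> on_abcd (2::nat) 2 1 1"
abbreviation "ac_b_d \<equiv> on_abcd (3::nat) 2 3 1"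
abbreviation "ac_d_b \<equiv> on_abcd (3::nat) 1 3 2"
abbreviation "ac_bd \<equiv> on_abcd (2::nat) 1 2 1"
abbreviation "ad_b_c \<equiv> on_abcd (3::nat) 2 1 3"
abbreviation "ad_c_b \<equiv> on_abcd (3::nat) 1 2 3"
abbreviation "ad_bc \<equiv> on_abcd (2::nat) 1 1 2"
abbreviation "bc_a_d \<equiv> on_abcd (2::nat) 3 3 1"
abbreviation "bc_ad \<equiv> on_abcd (1::nat) 2 2 1"
abbreviation "bd_c_a \<equiv> on_abcd (1::nat) 3 2 3"
abbreviation "bd_ac \<equiv> on_abcd (1::nat) 2 1 2"
abbreviation "cd_a_b \<equiv> on_abcd (2::nat) 1 3 3"
abbreviation "cd_b_a \<equiv> on_abcd (1::nat) 2 3 3"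
abbreviation "cd_ab \<equiv> on_abcd (1::nat) 1 2 2"

abbreviation "R1 \<equiv> [ab_c_d, ab_d_c, cd_a_b, cd_b_a]"
abbreviation "R2 \<equiv> [ab_c_d, ab_c_d, cd_a_b, cd_b_a]"
abbreviation "R3 \<equiv> [ab_c_d, ac_bd, bd_c_a, cd_ab]"
abbreviation "R4 \<equiv> [ab_c_d, ac_bd, bc_ad, cd_ab]"
abbreviation "R5 \<equiv> [ab_cd, ac_bd, ad_bc, bc_ad]"
abbreviation "R6 \<equiv> [ab_c_d, ac_bd, ad_bc, cd_ab]"
abbreviation "R7 \<equiv> [ab_c_d, ab_c_d, ac_bd, cd_ab]"
abbreviation "R8 \<equiv> [ab_c_d, ab_c_d, ac_bd, cd_b_a]"
abbreviation "R9 \<equiv> [ab_c_d, ab_c_d, ac_b_d, bc_ad]"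
abbreviation "R10 \<equiv> [ab_c_d, ac_bd, bd_ac, cd_b_a]"
abbreviation "R11 \<equiv> [ab_c_d, ac_d_b, ad_bc, bc_ad]"
abbreviation "R12 \<equiv> [ab_c_d, ab_c_d, ad_bc, bd_ac]"
abbreviation "R13 \<equiv> [ab_c_d, ab_c_d, ad_b_c, bd_ac]"
abbreviation "R14 \<equiv> [ab_c_d, ab_c_d, ac_b_d, bd_ac]"

lemma R1_uniform:
  "f (prof R1) a = 1/4" "f (prof R1) b = 1/4" "f (prof R1) c = 1/4" "f (prof R1) d = 1/4"
proof -
  have "f (prof R1) a = f (prof R1) b"
    by (rule prof_relabel(1)[of R1 b a c d]) (simp_all add: add_mset_commute)
  moreover have "f (prof R1) c = f (prof R1) d"
    by (rule prof_relabel(3)[of R1 a b d c]) (simp_all add: add_mset_commute)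
  moreover have "f (prof R1) a = f (prof R1) c"
    by (rule prof_relabel(1)[of R1 c d a b]) (simp_all add: add_mset_commute)
  moreover have "f (prof R1) a + f (prof R1) b + f (prof R1) c + f (prof R1) d = 1"
    by (rule prof_lottery) simp_all
  ultimately show
    "f (prof R1) a = 1/4" "f (prof R1) b = 1/4" "f (prof R1) c = 1/4" "f (prof R1) d = 1/4"
    by linarith+
qed

lemma R2_b_d: "f (prof R2) b = f (prof R2) a" "f (prof R2) d = 0"
proof -
  show "f (prof R2) b = f (prof R2) a"
    by (rule prof_relabel(2)[of R2 b a c d]) (simp_all add: add_mset_commute)
  show "f (prof R2) d = 0"
    using efficient_prof[of R2 0 0 1 "-1"] by (simp add: upper_prob_expand)
qed

lemma R2_a_less: "f (prof R2) a < 3/8"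
proof (rule ccontr)
  assume converse: "\<not> f (prof R2) a < 3/8"
  let ?dev = "[ab_c_d, ab_d_c, cd_a_b, cd_a_b]"
  have dev: "f (prof ?dev) a = f (prof R2) c" "f (prof ?dev) b = f (prof R2) d"
    "f (prof ?dev) c = f (prof R2) a" "f (prof ?dev) d = f (prof R2) b"
    by (rule prof_relabel[of R2 c d a b]; simp add: add_mset_commute)+
  have "\<forall>x\<in>{a, b, c, d}. upper_prob cd_b_a x (f (prof R1)) \<le> upper_prob cd_b_a x (f (prof ?dev))"
    using dev R1_uniform R2_b_d prof_lottery[of R2] converse
    by (simp add: upper_prob_expand; (intro conjI)?; linarith)
  then have "\<forall>x\<in>{a, b, c, d}.
        upper_prob cd_b_a x (f (prof ?dev)) = upper_prob cd_b_a x (f (prof R1))"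
    by (rule no_sd_manipulation[where j = 3 and w = cd_a_b]) simp_all
  then show False
    using dev R1_uniform R2_b_d converse
    by (simp add: upper_prob_expand; linarith)
qed

lemma R3_a_d_zero: "f (prof R3) a = 0" "f (prof R3) d = 0"
proof -
  have "f (prof R3) a = f (prof R3) d"
    by (rule prof_relabel(1)[of R3 d b c a]) (simp_all add: add_mset_commute)
  moreover have "\<exists>x\<in>{a, b, c, d}. on_abcd (-1) 1 1 (-1) x < (0::real) \<and> f (prof R3) x = 0"
    by (rule efficient_prof) (simp_all add: upper_prob_expand)
  ultimately show "f (prof R3) a = 0" "f (prof R3) d = 0"
    by auto
qed

lemma R4_c_one: "f (prof R4) c = 1"
proof -
  let ?dev = "[ab_c_d, ad_c_b, bc_ad, cd_ab]"
  have dev: "f (prof ?dev) a = f (prof R3) b" "f (prof ?dev) b = f (prof R3) a"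
    "f (prof ?dev) c = f (prof R3) c" "f (prof ?dev) d = f (prof R3) d"
    by (rule prof_relabel[of R3 b a c d]; simp add: add_mset_commute)+
  have "\<forall>x\<in>{a, b, c, d}. upper_prob ac_bd x (f (prof R4)) \<le> upper_prob ac_bd x (f (prof ?dev))"
    using dev R3_a_d_zero prof_lottery[of R3] prof_lottery[of R4]
    by (simp add: upper_prob_expand; (intro conjI)?; linarith)
  then have "\<forall>x\<in>{a, b, c, d}.
        upper_prob ac_bd x (f (prof ?dev)) = upper_prob ac_bd x (f (prof R4))"
    by (rule no_sd_manipulation[where j = 1 and w = ad_c_b]) simp_all
  moreover have "f (prof R4) a = f (prof R4) b"
    by (rule prof_relabel(1)[of R4 b a c d]) (simp_all add: add_mset_commute)
  ultimately show ?thesis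
    using dev R3_a_d_zero prof_lottery[of R3] prof_lottery[of R4]
    by (simp add: upper_prob_expand)
qed

lemma R5_a_one: "f (prof R5) a = 1"
proof -
  let ?dev = "[ab_cd, ac_bd, bc_ad, cd_ab]"
  have d: "f (prof R5) d = 0"
    using efficient_prof[of R5 1 0 0 "-1"] by (simp add: upper_prob_expand)
  have dev: "f (prof ?dev) a = f (prof R5) b" "f (prof ?dev) b = f (prof R5) c"
    "f (prof ?dev) c = f (prof R5) a" "f (prof ?dev) d = f (prof R5) d"
    by (rule prof_relabel[of R5 b c a d]; simp add: add_mset_commute)+
  have "\<forall>x\<in>{a, b, c, d}. upper_prob ab_c_d x (f (prof R4)) \<le> upper_prob ab_c_d x (f (prof ?dev))"
    using dev d R4_c_one prof_lottery[of R4] prof_lottery[of R5]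
    by (simp add: upper_prob_expand; (intro conjI)?; linarith)
  then have "\<forall>x\<in>{a, b, c, d}.
        upper_prob ab_c_d x (f (prof ?dev)) = upper_prob ab_c_d x (f (prof R4))"
    by (rule no_sd_manipulation[where j = 0 and w = ab_cd]) simp_all
  then show ?thesis
    using dev d R4_c_one prof_lottery[of R4] prof_lottery[of R5]
    by (simp add: upper_prob_expand)
qed

lemma R6_a_b_sum: "f (prof R6) a + f (prof R6) b = 1"
proof -
  let ?dev = "[ab_cd, ac_bd, ad_bc, cd_ab]"
  have dev: "f (prof ?dev) a = f (prof R5) a" "f (prof ?dev) b = f (prof R5) d"
    "f (prof ?dev) c = f (prof R5) b" "f (prof ?dev) d = f (prof R5) c"
    by (rule prof_relabel[of R5 a d b c]; simp add: add_mset_commute)+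
  have "\<forall>x\<in>{a, b, c, d}. upper_prob ab_c_d x (f (prof R6)) \<le> upper_prob ab_c_d x (f (prof ?dev))"
    using dev R5_a_one prof_lottery[of R5] prof_lottery[of R6]
    by (simp add: upper_prob_expand; (intro conjI)?; linarith)
  then have "\<forall>x\<in>{a, b, c, d}.
        upper_prob ab_c_d x (f (prof ?dev)) = upper_prob ab_c_d x (f (prof R6))"
    by (rule no_sd_manipulation[where j = 0 and w = ab_cd]) simp_all
  then show ?thesis
    using dev R5_a_one prof_lottery[of R5] prof_lottery[of R6]
    by (simp add: upper_prob_expand; linarith)
qed

lemma R7_a_b_sum: "f (prof R7) a + f (prof R7) b = 1"
proof -
  let ?dev = "[ad_bc, ab_c_d, ac_bd, cd_ab]"
  have dev: "f (prof ?dev) a = f (prof R6) a" "f (prof ?dev) b = f (prof R6) b"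
    "f (prof ?dev) c = f (prof R6) c" "f (prof ?dev) d = f (prof R6) d"
    by (rule prof_relabel[of R6 a b c d]; simp add: add_mset_commute)+
  have "\<forall>x\<in>{a, b, c, d}. upper_prob ab_c_d x (f (prof R7)) \<le> upper_prob ab_c_d x (f (prof ?dev))"
    using dev R6_a_b_sum prof_lottery[of R6] prof_lottery[of R7]
    by (simp add: upper_prob_expand; (intro conjI)?; linarith)
  then have "\<forall>x\<in>{a, b, c, d}.
        upper_prob ab_c_d x (f (prof ?dev)) = upper_prob ab_c_d x (f (prof R7))"
    by (rule no_sd_manipulation[where j = 0 and w = ad_bc]) simp_all
  then show ?thesis
    using dev R6_a_b_sum prof_lottery[of R6] prof_lottery[of R7]
    by (simp add: upper_prob_expand; linarith)
qed

lemma R8_c_d_zero: "f (prof R8) c = 0" "f (prof R8) d = 0"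
proof -
  have "\<forall>x\<in>{a, b, c, d}. upper_prob cd_ab x (f (prof R7)) \<le> upper_prob cd_ab x (f (prof R8))"
    using R7_a_b_sum prof_lottery[of R7] prof_lottery[of R8]
    by (simp add: upper_prob_expand; (intro conjI)?; linarith)
  then have "\<forall>x\<in>{a, b, c, d}. upper_prob cd_ab x (f (prof R8)) = upper_prob cd_ab x (f (prof R7))"
    by (rule no_sd_manipulation[where j = 3 and w = cd_b_a]) simp_all
  then show "f (prof R8) c = 0" "f (prof R8) d = 0"
    using R7_a_b_sum prof_lottery[of R7] prof_lottery[of R8]
    by (simp add: upper_prob_expand; linarith)+
qed

lemma R8_b_less: "f (prof R8) b < 3/8"
proof (rule ccontr)
  assume converse: "\<not> f (prof R8) b < 3/8"
  have "\<forall>x\<in>{a, b, c, d}. upper_prob ac_bd x (f (prof R8)) \<le> upper_prob ac_bd x (f (prof R2))"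
    using R2_a_less R2_b_d prof_lottery[of R2] prof_lottery[of R8] converse
    by (simp add: upper_prob_expand; (intro conjI)?; linarith)
  then have "\<forall>x\<in>{a, b, c, d}. upper_prob ac_bd x (f (prof R2)) = upper_prob ac_bd x (f (prof R8))"
    by (rule no_sd_manipulation[where j = 2 and w = cd_a_b]) simp_all
  then show False
    using R2_a_less R2_b_d prof_lottery[of R2] prof_lottery[of R8] converse
    by (simp add: upper_prob_expand; linarith)
qed

lemma R9_b_greater: "5/8 < f (prof R9) b"
proof (rule ccontr)
  assume converse: "\<not> 5/8 < f (prof R9) b"
  let ?dev = "[ab_c_d, ab_c_d, ac_bd, bc_a_d]"
  have dev: "f (prof ?dev) a = f (prof R9) b" "f (prof ?dev) b = f (prof R9) a"
    "f (prof ?dev) c = f (prof R9) c" "f (prof ?dev) d = f (prof R9) d"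
    by (rule prof_relabel[of R9 b a c d]; simp add: add_mset_commute)+
  have "\<forall>x\<in>{a, b, c, d}. upper_prob cd_b_a x (f (prof R8)) \<le> upper_prob cd_b_a x (f (prof ?dev))"
    using dev R8_c_d_zero R8_b_less prof_lottery[of R8] prof_lottery[of R9] converse
    by (simp add: upper_prob_expand; (intro conjI)?; linarith)
  then have "\<forall>x\<in>{a, b, c, d}.
        upper_prob cd_b_a x (f (prof ?dev)) = upper_prob cd_b_a x (f (prof R8))"
    by (rule no_sd_manipulation[where j = 3 and w = bc_a_d]) simp_all
  then show False
    using dev R8_c_d_zero R8_b_less prof_lottery[of R8] prof_lottery[of R9] converse
    by (simp add: upper_prob_expand; linarith)
qed

lemma R10_a_d_zero: "f (prof R10) a = 0" "f (prof R10) d = 0"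
proof -
  have "f (prof R10) a = f (prof R10) d"
    by (rule prof_relabel(1)[of R10 d c b a]) (simp_all add: add_mset_commute)
  moreover have "\<exists>x\<in>{a, b, c, d}. on_abcd (-1) 1 1 (-1) x < (0::real) \<and> f (prof R10) x = 0"
    by (rule efficient_prof) (simp_all add: upper_prob_expand)
  ultimately show "f (prof R10) a = 0" "f (prof R10) d = 0"
    by auto
qed

lemma R11_a_c_sum: "f (prof R11) a + f (prof R11) c = 1"
proof -
  let ?dev = "[ab_c_d, cd_a_b, ad_bc, bc_ad]"
  have dev: "f (prof ?dev) a = f (prof R10) b" "f (prof ?dev) b = f (prof R10) a"
    "f (prof ?dev) c = f (prof R10) c" "f (prof ?dev) d = f (prof R10) d"
    by (rule prof_relabel[of R10 b a c d]; simp add: add_mset_commute)+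
  have "\<forall>x\<in>{a, b, c, d}. upper_prob ac_d_b x (f (prof R11)) \<le> upper_prob ac_d_b x (f (prof ?dev))"
    using dev R10_a_d_zero prof_lottery[of R10] prof_lottery[of R11]
    by (simp add: upper_prob_expand; (intro conjI)?; linarith)
  then have "\<forall>x\<in>{a, b, c, d}.
        upper_prob ac_d_b x (f (prof ?dev)) = upper_prob ac_d_b x (f (prof R11))"
    by (rule no_sd_manipulation[where j = 1 and w = cd_a_b]) simp_all
  then show ?thesis
    using dev R10_a_d_zero prof_lottery[of R10] prof_lottery[of R11]
    by (simp add: upper_prob_expand; linarith)
qed

lemma R12_b_c: "f (prof R12) b = f (prof R12) a" "f (prof R12) c = 0"
proof -
  show "f (prof R12) b = f (prof R12) a"
    by (rule prof_relabel(2)[of R12 b a c d]) (simp_all add: add_mset_commute)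
  show "f (prof R12) c = 0"
    using efficient_prof[of R12 0 1 "-1" 0] by (simp add: upper_prob_expand)
qed

lemma R13_a_b_sum: "f (prof R13) a + f (prof R13) b = 1"
proof -
  let ?dev = "[ac_bd, ab_c_d, ad_b_c, bd_ac]"
  have dev: "f (prof ?dev) a = f (prof R11) a" "f (prof ?dev) b = f (prof R11) c"
    "f (prof ?dev) c = f (prof R11) d" "f (prof ?dev) d = f (prof R11) b"
    by (rule prof_relabel[of R11 a c d b]; simp add: add_mset_commute)+
  have "\<forall>x\<in>{a, b, c, d}. upper_prob ab_c_d x (f (prof R13)) \<le> upper_prob ab_c_d x (f (prof ?dev))"
    using dev R11_a_c_sum prof_lottery[of R11] prof_lottery[of R13]
    by (simp add: upper_prob_expand; (intro conjI)?; linarith)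
  then have "\<forall>x\<in>{a, b, c, d}.
        upper_prob ab_c_d x (f (prof ?dev)) = upper_prob ab_c_d x (f (prof R13))"
    by (rule no_sd_manipulation[where j = 0 and w = ac_bd]) simp_all
  then show ?thesis
    using dev R11_a_c_sum prof_lottery[of R11] prof_lottery[of R13]
    by (simp add: upper_prob_expand; linarith)
qed

lemma R13_a_ge: "1/2 \<le> f (prof R13) a"
proof (rule ccontr)
  assume converse: "\<not> 1/2 \<le> f (prof R13) a"
  have "\<forall>x\<in>{a, b, c, d}. upper_prob ad_b_c x (f (prof R13)) \<le> upper_prob ad_b_c x (f (prof R12))"
    using R12_b_c R13_a_b_sum prof_lottery[of R12] prof_lottery[of R13] converse
    by (simp add: upper_prob_expand; (intro conjI)?; linarith)
  then have "\<forall>x\<in>{a, b, c, d}.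
        upper_prob ad_b_c x (f (prof R12)) = upper_prob ad_b_c x (f (prof R13))"
    by (rule no_sd_manipulation[where j = 2 and w = ad_bc]) simp_all
  then show False
    using R12_b_c R13_a_b_sum prof_lottery[of R12] prof_lottery[of R13] converse
    by (simp add: upper_prob_expand; linarith)
qed

lemma R14_a_c_ge: "1/2 \<le> f (prof R14) a + f (prof R14) c"
proof (rule ccontr)
  assume converse: "\<not> 1/2 \<le> f (prof R14) a + f (prof R14) c"
  have "\<forall>x\<in>{a, b, c, d}. upper_prob ac_b_d x (f (prof R14)) \<le> upper_prob ac_b_d x (f (prof R13))"
    using R13_a_ge R13_a_b_sum prof_lottery[of R13] prof_lottery[of R14] converse
    by (simp add: upper_prob_expand; (intro conjI)?; linarith)
  then have "\<forall>x\<in>{a, b, c, d}.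
        upper_prob ac_b_d x (f (prof R13)) = upper_prob ac_b_d x (f (prof R14))"
    by (rule no_sd_manipulation[where j = 2 and w = ad_b_c]) simp_all
  then show False
    using R13_a_ge R13_a_b_sum prof_lottery[of R13] prof_lottery[of R14] converse
    by (simp add: upper_prob_expand; linarith)
qed

lemma R14_b_d_greater: "5/8 < f (prof R14) b + f (prof R14) d"
proof (rule ccontr)
  assume converse: "\<not> 5/8 < f (prof R14) b + f (prof R14) d"
  have "\<forall>x\<in>{a, b, c, d}. upper_prob bd_ac x (f (prof R14)) \<le> upper_prob bd_ac x (f (prof R9))"
    using R9_b_greater prof_lottery[of R9] prof_lottery[of R14] converse
    by (simp add: upper_prob_expand; (intro conjI)?; linarith)
  then have "\<forall>x\<in>{a, b, c, d}.
        upper_prob bd_ac x (f (prof R9)) = upper_prob bd_ac x (f (prof R14))"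
    by (rule no_sd_manipulation[where j = 3 and w = bc_ad]) simp_all
  then show False
    using R9_b_greater prof_lottery[of R9] prof_lottery[of R14] converse
    by (simp add: upper_prob_expand; linarith)
qed

lemma impossible: False
  using R14_a_c_ge R14_b_d_greater prof_lottery(5)[of R14] by simp

end

lemma obtain_four_distinct:
  assumes "finite A" "4 \<le> card A"
  obtains a b c d where "distinct [a, b, c, d]" "{a, b, c, d} \<subseteq> A"
proof -
  obtain B where B: "B \<subseteq> A" "card B = 4" "finite B"
    using obtain_subset_with_card_n[OF assms(2)] by blast
  then obtain xs where xs: "set xs = B" "distinct xs"
    using finite_distinct_list by blast
  then have "length xs = 4"
    using B distinct_card by fastforce
  then obtain a b c d where "xs = [a, b, c, d]"
    by (auto simp: numeral_eq_Suc length_Suc_conv)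
  with xs B show ?thesis
    by (intro that) auto
qed

theorem theorem3p1:
  fixes A :: "'a set" and n :: nat
  assumes "finite A" and "card A \<ge> 4" and "n \<ge> 4"
  shows "\<not> (\<exists>f. SDS A n f \<and> anonymous A n f \<and> neutral A n f \<and>
                efficient A n f \<and> strategyproof A n f)"
proof
  assume "\<exists>f. SDS A n f \<and> anonymous A n f \<and> neutral A n f \<and> efficient A n f \<and> strategyproof A n f"
  then obtain f where f: "SDS A n f" "anonymous A n f" "neutral A n f" "efficient A n f"
    "strategyproof A n f"
    by blast
  obtain a b c d where "distinct [a, b, c, d]" "{a, b, c, d} \<subseteq> A"
    using obtain_four_distinct[OF assms(1,2)] .
  then interpret sds_four_alternatives A n f a b c d
    using assms f by unfold_locales auto
  show False
    by (rule impossible)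
qed

end
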